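(* In the affine setting described in the context, let $\sigma\in(0,1]$ and let $f,\alpha,s:I^q\to\mathbb{R}$ be Hölder continuous with exponent $\sigma$, with $s(x_{1,j_1},\dots,x_{q,j_q})=f(x_{1,j_1},\dots,x_{q,j_q})$ for all $(j_1,\dots,j_q)\in\prod_{k=1}^q\{0,M_k\}$. Let $a=\min\{|a_{k,i}|:1\le k\le q,\ 1\le i\le M_k\}$ and suppose $\max\big\{\|\alpha\|_\infty/a^\sigma,\ \|\alpha\|\big\}<1$, where $\|\alpha\|=\|\alpha\|_\infty+[\alpha]_\sigma$. Then the $\alpha$-fractal function $f^\alpha$ is Hölder continuous with exponent $\sigma$. Moreover, $$q\le\dim_H\mathcal{G}(f^\alpha)\le\underline{\dim}_B\mathcal{G}(f^\alpha)\le\overline{\dim}_B\mathcal{G}(f^\alpha)\le q+1-\sigma.$$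
   Context: Affine setting: $I=[0,1]$; for each $k\in\{1,\dots,q\}$, $M_k\ge2$ and $0=x_{k,0}<\dots<x_{k,M_k}=1$, $I_{k,i}=[x_{k,i-1},x_{k,i}]$. For $1\le i\le M_k$, $u_{k,i}:I\to I_{k,i}$ is affine, $u_{k,i}(x)=a_{k,i}x+b_{k,i}$, with $a_{k,i}=x_{k,i}-x_{k,i-1}$, $b_{k,i}=x_{k,i-1}$ if $i$ is odd and $a_{k,i}=x_{k,i-1}-x_{k,i}$, $b_{k,i}=x_{k,i}$ if $i$ is even. For $i=(i_1,\dots,i_q)$, $u_i(y)=(u_{1,i_1}(y_1),\dots,u_{q,i_q}(y_q))$. Given $f,\alpha,s\in\mathcal{C}(I^q)$ with $\|\alpha\|_\infty<1$ and $s=f$ at the vertices of $I^q$, the $\alpha$-fractal function $f^\alpha$ is the unique continuous $f^\alpha:I^q\to\mathbb{R}$ with $f^\alpha(x)=f(x)+\alpha(x)[f^\alpha(u_i^{-1}(x))-s(u_i^{-1}(x))]$ for all $i\in\prod_k\{1,\dots,M_k\}$ and $x\in\prod_k I_{k,i_k}$. Hölder: $|h(x)-h(y)|\le K\|x-y\|_2^\sigma$; $[h]_\sigma=\sup_{x\ne y}|h(x)-h(y)|/\|x-y\|_2^\sigma$. $\mathcal{G}(g)=\{(x,g(x)):x\in I^q\}$; $\dim_H,\underline{\dim}_B,\overline{\dim}_B$ are Hausdorff, lower box, upper box dimension. *)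

theory Defs
  imports "HOL-Analysis.Analysis"
begin

text \<open>Partition data: for each coordinate k (index type 'q, so q = CARD('q)),
  M k is the number of subintervals and xs k i (0 <= i <= M k) are the nodes.\<close>

definition partition_data :: "('q::finite \<Rightarrow> nat) \<Rightarrow> ('q \<Rightarrow> nat \<Rightarrow> real) \<Rightarrow> bool" where
  "partition_data M xs \<longleftrightarrow>
     (\<forall>k. 2 \<le> M k \<and> xs k 0 = 0 \<and> xs k (M k) = 1 \<and>
          (\<forall>i < M k. xs k i < xs k (Suc i)))"

definition acoef :: "('q \<Rightarrow> nat \<Rightarrow> real) \<Rightarrow> 'q \<Rightarrow> nat \<Rightarrow> real" where
  "acoef xs k i = (if odd i then xs k i - xs k (i - 1) else xs k (i - 1) - xs k i)"

definition bcoef :: "('q \<Rightarrow> nat \<Rightarrow> real) \<Rightarrow> 'q \<Rightarrow> nat \<Rightarrow> real" where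
  "bcoef xs k i = (if odd i then xs k (i - 1) else xs k i)"

definition uk :: "('q \<Rightarrow> nat \<Rightarrow> real) \<Rightarrow> 'q \<Rightarrow> nat \<Rightarrow> real \<Rightarrow> real" where
  "uk xs k i t = acoef xs k i * t + bcoef xs k i"

definition uinv :: "('q::finite \<Rightarrow> nat \<Rightarrow> real) \<Rightarrow> ('q \<Rightarrow> nat) \<Rightarrow> real^'q \<Rightarrow> real^'q" where
  "uinv xs i y = (\<chi> k. (y $ k - bcoef xs k (i k)) / acoef xs k (i k))"

definition cell :: "('q::finite \<Rightarrow> nat \<Rightarrow> real) \<Rightarrow> ('q \<Rightarrow> nat) \<Rightarrow> (real^'q) set" where
  "cell xs i = {y. \<forall>k. xs k (i k - 1) \<le> y $ k \<and> y $ k \<le> xs k (i k)}"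

definition unit_cube :: "(real^'q::finite) set" where
  "unit_cube = cbox 0 1"

definition is_alpha_fractal ::
  "('q::finite \<Rightarrow> nat) \<Rightarrow> ('q \<Rightarrow> nat \<Rightarrow> real) \<Rightarrow> (real^'q \<Rightarrow> real) \<Rightarrow> (real^'q \<Rightarrow> real)
     \<Rightarrow> (real^'q \<Rightarrow> real) \<Rightarrow> (real^'q \<Rightarrow> real) \<Rightarrow> bool" where
  "is_alpha_fractal M xs f \<alpha> s g \<longleftrightarrow>
     continuous_on unit_cube g \<and>
     (\<forall>i. (\<forall>k. 1 \<le> i k \<and> i k \<le> M k) \<longrightarrow>
        (\<forall>y \<in> cell xs i. g y = f y + \<alpha> y * (g (uinv xs i y) - s (uinv xs i y))))"

definition holder_on :: "real \<Rightarrow> ('a::metric_space) set \<Rightarrow> ('a \<Rightarrow> real) \<Rightarrow> bool" where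
  "holder_on \<sigma> S h \<longleftrightarrow> (\<exists>K. \<forall>x\<in>S. \<forall>y\<in>S. \<bar>h x - h y\<bar> \<le> K * dist x y powr \<sigma>)"

definition holder_seminorm :: "real \<Rightarrow> ('a::metric_space) set \<Rightarrow> ('a \<Rightarrow> real) \<Rightarrow> real" where
  "holder_seminorm \<sigma> S h = (SUP (x,y) \<in> {(x,y). x \<in> S \<and> y \<in> S \<and> x \<noteq> y}. \<bar>h x - h y\<bar> / dist x y powr \<sigma>)"

definition sup_norm_on :: "'a set \<Rightarrow> ('a \<Rightarrow> real) \<Rightarrow> real" where
  "sup_norm_on S h = (SUP x\<in>S. \<bar>h x\<bar>)"

definition hausdorff_content :: "real \<Rightarrow> real \<Rightarrow> ('a::metric_space) set \<Rightarrow> ennreal" where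
  "hausdorff_content s \<delta> E =
     Inf {(\<Sum>n. ennreal (diameter (U n) powr s)) | U :: nat \<Rightarrow> 'a set.
            E \<subseteq> (\<Union>n. U n) \<and> (\<forall>n. bounded (U n) \<and> diameter (U n) \<le> \<delta>)}"

definition hausdorff_measure :: "real \<Rightarrow> ('a::metric_space) set \<Rightarrow> ennreal" where
  "hausdorff_measure s E = (SUP \<delta>\<in>{0<..}. hausdorff_content s \<delta> E)"

definition hausdorff_dim :: "('a::metric_space) set \<Rightarrow> ereal" where
  "hausdorff_dim E = Inf {ereal s | s. 0 < s \<and> hausdorff_measure s E = 0}"

definition cover_number :: "real \<Rightarrow> ('a::metric_space) set \<Rightarrow> nat" where
  "cover_number \<delta> E = (LEAST n. \<exists>F. finite F \<and> card F = n \<and> E \<subseteq> \<Union>F \<and>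
                                  (\<forall>U\<in>F. bounded U \<and> diameter U \<le> \<delta>))"

definition lower_box_dim :: "('a::metric_space) set \<Rightarrow> ereal" where
  "lower_box_dim E = Liminf (at_right 0) (\<lambda>\<delta>. ereal (ln (real (cover_number \<delta> E)) / - ln \<delta>))"

definition upper_box_dim :: "('a::metric_space) set \<Rightarrow> ereal" where
  "upper_box_dim E = Limsup (at_right 0) (\<lambda>\<delta>. ereal (ln (real (cover_number \<delta> E)) / - ln \<delta>))"

definition graph_of :: "'a set \<Rightarrow> ('a \<Rightarrow> 'b) \<Rightarrow> ('a \<times> 'b) set" where
  "graph_of S g = {(x, g x) | x. x \<in> S}"

end

theory Submission
  imports Defs
begin

text \<open>For nearby points \<open>u, v\<close> the self-referential equation expresses \<open>f\<^sup>\<alpha> u - f\<^sup>\<alpha> v\<close> through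
  \<open>f\<close>, \<open>\<alpha>\<close>, \<open>s\<close> and the increment of \<open>f\<^sup>\<alpha>\<close> at preimages that are at most \<open>1 / a\<close> times farther
  apart. Hence the regularised Hoelder quotient
  \<open>\<Phi>\<^sub>\<delta> = sup |f\<^sup>\<alpha> u - f\<^sup>\<alpha> v| / max |u - v| \<delta> ^ \<sigma>\<close>, which is finite for \<open>\<delta> > 0\<close>, satisfies
  \<open>\<Phi>\<^sub>\<delta> \<le> C + (\<parallel>\<alpha>\<parallel>\<^sub>\<infinity> / a ^ \<sigma>) \<Phi>\<^sub>\<delta>\<close> with \<open>C\<close> independent of \<open>\<delta>\<close>, and \<open>f\<^sup>\<alpha>\<close> is \<open>\<sigma>\<close>-Hoelder.

  The dimension bounds hold for the graph of any \<open>\<sigma>\<close>-Hoelder function on \<open>I\<^sup>q\<close>: boxes of side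
  \<open>1 / n\<close> over a grid of \<open>n\<^sup>q\<close> cells cover it with \<open>O(n ^ (q + 1 - \<sigma>))\<close> sets, which bounds the
  upper box dimension; Hausdorff dimension never exceeds lower box dimension; and since every
  cover projects onto a cover of \<open>I\<^sup>q\<close>, whose Lebesgue measure is \<open>1\<close>, the Hausdorff dimension is
  at least \<open>q\<close>.\<close>

section \<open>Partition geometry\<close>

lemma partition_dataD:
  assumes "partition_data M xs"
  shows "2 \<le> M k" "xs k 0 = 0" "xs k (M k) = 1" "i < M k \<Longrightarrow> xs k i < xs k (Suc i)"
  using assms unfolding partition_data_def by blast+

lemma partition_data_mono:
  assumes "partition_data M xs" "i \<le> j" "j \<le> M k"
  shows "xs k i \<le> xs k j"
  using assms(2,3)
proof (induction j)
  case (Suc j)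
  then show ?case
    using partition_dataD(4)[OF assms(1), of j k] by (cases "i = Suc j") force+
qed simp

lemma partition_data_node_bounds:
  assumes "partition_data M xs" "i \<le> M k"
  shows "0 \<le> xs k i" "xs k i \<le> 1"
  using partition_data_mono[OF assms(1), of 0 i k] partition_data_mono[OF assms(1), of i "M k" k]
    assms partition_dataD[OF assms(1)] by auto

lemma abs_acoef:
  assumes "partition_data M xs" "1 \<le> i" "i \<le> M k"
  shows "\<bar>acoef xs k i\<bar> = xs k i - xs k (i - 1)" "xs k (i - 1) < xs k i"
proof -
  show lt: "xs k (i - 1) < xs k i"
    using partition_dataD(4)[OF assms(1), of "i - 1" k] assms by simp
  then show "\<bar>acoef xs k i\<bar> = xs k i - xs k (i - 1)" unfolding acoef_def by auto
qed

lemma partition_data_locate: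
  assumes "partition_data M xs" "0 \<le> t" "t \<le> 1"
  obtains i where "1 \<le> i" "i \<le> M k" "xs k (i - 1) \<le> t" "t \<le> xs k i"
proof -
  have ex: "t \<le> xs k (M k)" using assms partition_dataD(3)[OF assms(1)] by simp
  define j where "j = (LEAST j. t \<le> xs k j)"
  have tj: "t \<le> xs k j" unfolding j_def using ex by (rule LeastI)
  have jM: "j \<le> M k" unfolding j_def using ex by (rule Least_le)
  show ?thesis
  proof (cases "j = 0")
    case True
    then have "t = 0" using tj assms partition_dataD(2)[OF assms(1)] by simp
    then show ?thesis
      using that[of 1] partition_dataD(1,2)[OF assms(1), of k] partition_data_node_bounds[OF assms(1), of 1 k]
      by simp
  next
    case False
    then have "\<not> t \<le> xs k (j - 1)" unfolding j_def by (intro not_less_Least) simp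
    then show ?thesis using that[of j] False jM tj by simp
  qed
qed

definition min_ratio :: "('q::finite \<Rightarrow> nat) \<Rightarrow> ('q \<Rightarrow> nat \<Rightarrow> real) \<Rightarrow> real" where
  "min_ratio M xs = Min {\<bar>acoef xs k i\<bar> | k i. 1 \<le> i \<and> i \<le> M k}"

lemma
  fixes M :: "'q::finite \<Rightarrow> nat"
  assumes "partition_data M xs"
  shows min_ratio_le: "1 \<le> i \<Longrightarrow> i \<le> M k \<Longrightarrow> min_ratio M xs \<le> \<bar>acoef xs k i\<bar>"
    and min_ratio_pos: "0 < min_ratio M xs"
    and min_ratio_le_1: "min_ratio M xs \<le> 1"
proof -
  let ?S = "{\<bar>acoef xs k i\<bar> | k i. 1 \<le> i \<and> i \<le> M k}"
  have "?S = (\<lambda>(k, i). \<bar>acoef xs k i\<bar>) ` (SIGMA k:UNIV. {1..M k})"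
    by (auto simp: image_iff) blast
  then have fin: "finite ?S" by simp
  obtain k0 :: 'q where True by simp
  have M2: "2 \<le> M k0" using partition_dataD(1)[OF assms] .
  then have ne: "\<bar>acoef xs k0 1\<bar> \<in> ?S" by force
  show le: "min_ratio M xs \<le> \<bar>acoef xs k i\<bar>" if "1 \<le> i" "i \<le> M k" for k i
    unfolding min_ratio_def using fin that by (intro Min_le) blast+
  have "min_ratio M xs \<in> ?S" unfolding min_ratio_def using fin ne by (intro Min_in) blast+
  then obtain k i where "1 \<le> i" "i \<le> M k" "min_ratio M xs = \<bar>acoef xs k i\<bar>" by blast
  then show "0 < min_ratio M xs" using abs_acoef[OF assms] by simp
  have "min_ratio M xs \<le> xs k0 1 - xs k0 0" using le[of 1 k0] abs_acoef[OF assms, of 1 k0] M2 by simp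
  then show "min_ratio M xs \<le> 1"
    using partition_data_node_bounds[OF assms, of 1 k0] partition_dataD(2)[OF assms] M2 by simp
qed

definition uk_inv :: "('q \<Rightarrow> nat \<Rightarrow> real) \<Rightarrow> 'q \<Rightarrow> nat \<Rightarrow> real \<Rightarrow> real" where
  "uk_inv xs k i t = (t - bcoef xs k i) / acoef xs k i"

lemma uinv_component: "uinv xs i y $ k = uk_inv xs k (i k) (y $ k)"
  by (simp add: uinv_def uk_inv_def)

lemma uk_inv_range:
  assumes "partition_data M xs" "1 \<le> i" "i \<le> M k" "xs k (i - 1) \<le> t" "t \<le> xs k i"
  shows "0 \<le> uk_inv xs k i t" "uk_inv xs k i t \<le> 1"
proof -
  have "xs k (i - 1) < xs k i" using abs_acoef[OF assms(1-3)] by simp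
  moreover have "(t - xs k i) / (xs k (i - 1) - xs k i) = (xs k i - t) / (xs k i - xs k (i - 1))"
    by (simp add: divide_simps) (simp add: algebra_simps)
  ultimately show "0 \<le> uk_inv xs k i t" "uk_inv xs k i t \<le> 1"
    using assms(4,5) by (auto simp: uk_inv_def acoef_def bcoef_def divide_simps)
qed

lemma uk_inv_dist_same:
  assumes "partition_data M xs" "1 \<le> i" "i \<le> M k"
  shows "\<bar>uk_inv xs k i s - uk_inv xs k i t\<bar> \<le> \<bar>s - t\<bar> / min_ratio M xs"
proof -
  have "\<bar>uk_inv xs k i s - uk_inv xs k i t\<bar> = \<bar>s - t\<bar> / \<bar>acoef xs k i\<bar>"
    by (simp add: uk_inv_def diff_divide_distrib[symmetric])
  also have "\<dots> \<le> \<bar>s - t\<bar> / min_ratio M xs"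
    using min_ratio_le[OF assms] min_ratio_pos[OF assms(1)] by (intro divide_left_mono) auto
  finally show ?thesis .
qed

text \<open>Consecutive maps have opposite orientations, so both inverses send the common node
  \<open>xs k i\<close> to the same endpoint of \<open>[0, 1]\<close>; the images of \<open>s \<le> xs k i \<le> t\<close> therefore
  lie at distances \<open>P\<close> and \<open>Q\<close> from that endpoint on the same side.\<close>
lemma uk_inv_dist_adjacent:
  assumes pd: "partition_data M xs" and i: "1 \<le> i" "Suc i \<le> M k"
    and s: "xs k (i - 1) \<le> s" "s \<le> xs k i" and t: "xs k i \<le> t" "t \<le> xs k (Suc i)"
  shows "\<bar>uk_inv xs k i s - uk_inv xs k (Suc i) t\<bar> \<le> (t - s) / min_ratio M xs"
proof -
  define a where "a = min_ratio M xs"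
  have a: "0 < a" unfolding a_def using min_ratio_pos[OF pd] .
  have a1: "a \<le> xs k i - xs k (i - 1)"
    using abs_acoef[OF pd i(1), of k] min_ratio_le[OF pd i(1), of k] i unfolding a_def by simp
  have a2: "a \<le> xs k (Suc i) - xs k i"
    using abs_acoef[OF pd _ i(2)] min_ratio_le[OF pd _ i(2)] unfolding a_def by simp
  define P where "P = (xs k i - s) / (xs k i - xs k (i - 1))"
  define Q where "Q = (t - xs k i) / (xs k (Suc i) - xs k i)"
  have "P \<le> (t - s) / (xs k i - xs k (i - 1))"
    unfolding P_def using t a1 a by (intro divide_right_mono) auto
  also have "\<dots> \<le> (t - s) / a" using s t a1 a by (intro divide_left_mono) auto
  finally have P: "0 \<le> P" "P \<le> (t - s) / a" unfolding P_def using s a1 a by auto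
  have "Q \<le> (t - s) / (xs k (Suc i) - xs k i)"
    unfolding Q_def using s a2 a by (intro divide_right_mono) auto
  also have "\<dots> \<le> (t - s) / a" using s t a2 a by (intro divide_left_mono) auto
  finally have Q: "0 \<le> Q" "Q \<le> (t - s) / a" unfolding Q_def using t a2 a by auto
  have "\<bar>uk_inv xs k i s - uk_inv xs k (Suc i) t\<bar> = \<bar>P - Q\<bar>"
  proof (cases "odd i")
    case True
    have "uk_inv xs k i s = 1 - P"
      unfolding uk_inv_def P_def using True a1 a by (simp add: acoef_def bcoef_def divide_simps)
    moreover have "uk_inv xs k (Suc i) t = 1 - Q"
      unfolding uk_inv_def Q_def using True a2 a
      by (simp add: acoef_def bcoef_def divide_simps) (simp add: algebra_simps)
    ultimately show ?thesis by simp
  next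
    case False
    have "uk_inv xs k i s = P"
      unfolding uk_inv_def P_def using False a1 a
      by (simp add: acoef_def bcoef_def divide_simps) (simp add: algebra_simps)
    moreover have "uk_inv xs k (Suc i) t = Q"
      unfolding uk_inv_def Q_def using False a2 a by (simp add: acoef_def bcoef_def divide_simps)
    ultimately show ?thesis by simp
  qed
  then show ?thesis using P Q unfolding a_def by linarith
qed

abbreviation multi_index :: "('q \<Rightarrow> nat) \<Rightarrow> ('q \<Rightarrow> nat) \<Rightarrow> bool" where
  "multi_index M i \<equiv> \<forall>k. 1 \<le> i k \<and> i k \<le> M k"

lemma mem_unit_cube: "x \<in> unit_cube \<longleftrightarrow> (\<forall>k. 0 \<le> x $ k \<and> x $ k \<le> (1::real))"
  unfolding unit_cube_def by (simp add: mem_box_cart)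

lemma zero_mem_unit_cube: "0 \<in> (unit_cube :: (real^'q::finite) set)"
  unfolding mem_unit_cube by simp

lemma bounded_unit_cube: "bounded (unit_cube :: (real^'q::finite) set)"
  unfolding unit_cube_def by (rule bounded_cbox)

lemma compact_unit_cube: "compact (unit_cube :: (real^'q::finite) set)"
  unfolding unit_cube_def by (rule compact_cbox)

lemma uinv_mem_unit_cube:
  assumes "partition_data M xs" "multi_index M i" "y \<in> cell xs i"
  shows "uinv xs i y \<in> unit_cube"
  using assms uk_inv_range[OF assms(1)] unfolding mem_unit_cube uinv_component cell_def by blast

lemma uk_inv_close_le:
  assumes pd: "partition_data M xs" and st: "0 \<le> s" "s \<le> t" "t \<le> 1" "t - s < min_ratio M xs"
  obtains i j where "1 \<le> i" "i \<le> M k" "xs k (i - 1) \<le> s" "s \<le> xs k i"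
    "1 \<le> j" "j \<le> M k" "xs k (j - 1) \<le> t" "t \<le> xs k j"
    "\<bar>uk_inv xs k i s - uk_inv xs k j t\<bar> \<le> \<bar>s - t\<bar> / min_ratio M xs"
proof -
  obtain i where i: "1 \<le> i" "i \<le> M k" "xs k (i - 1) \<le> s" "s \<le> xs k i"
    using partition_data_locate[OF pd, of s k] st by auto
  show ?thesis
  proof (cases "t \<le> xs k i")
    case True
    show ?thesis
      by (rule that[OF i i(1,2) _ True uk_inv_dist_same[OF pd i(1,2)]]) (use i(3) st in linarith)
  next
    case False
    have iM: "i < M k" using False i partition_dataD(3)[OF pd, of k] st by (metis le_antisym not_le)
    have "min_ratio M xs \<le> xs k (Suc i) - xs k i"
      using min_ratio_le[OF pd, of "Suc i" k] abs_acoef[OF pd, of "Suc i" k] iM by simp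
    then have tS: "t \<le> xs k (Suc i)" using st i by linarith
    have close: "\<bar>uk_inv xs k i s - uk_inv xs k (Suc i) t\<bar> \<le> \<bar>s - t\<bar> / min_ratio M xs"
      using uk_inv_dist_adjacent[OF pd i(1), of k s t] iM i(3,4) False tS st by simp
    show ?thesis by (rule that[OF i _ _ _ tS close]) (use iM False in auto)
  qed
qed

lemma uk_inv_close:
  assumes pd: "partition_data M xs"
    and st: "0 \<le> s" "s \<le> 1" "0 \<le> t" "t \<le> 1" "\<bar>s - t\<bar> < min_ratio M xs"
  obtains i j where "1 \<le> i" "i \<le> M k" "xs k (i - 1) \<le> s" "s \<le> xs k i"
    "1 \<le> j" "j \<le> M k" "xs k (j - 1) \<le> t" "t \<le> xs k j"
    "\<bar>uk_inv xs k i s - uk_inv xs k j t\<bar> \<le> \<bar>s - t\<bar> / min_ratio M xs"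
proof (cases "s \<le> t")
  case True
  obtain i j where "1 \<le> i" "i \<le> M k" "xs k (i - 1) \<le> s" "s \<le> xs k i"
    "1 \<le> j" "j \<le> M k" "xs k (j - 1) \<le> t" "t \<le> xs k j"
    "\<bar>uk_inv xs k i s - uk_inv xs k j t\<bar> \<le> \<bar>s - t\<bar> / min_ratio M xs"
    by (rule uk_inv_close_le[OF pd, of s t k]) (use st True in auto)
  then show ?thesis by (rule that)
next
  case False
  obtain j i where ij: "1 \<le> j" "j \<le> M k" "xs k (j - 1) \<le> t" "t \<le> xs k j"
    "1 \<le> i" "i \<le> M k" "xs k (i - 1) \<le> s" "s \<le> xs k i"
    "\<bar>uk_inv xs k j t - uk_inv xs k i s\<bar> \<le> \<bar>t - s\<bar> / min_ratio M xs"
    by (rule uk_inv_close_le[OF pd, of t s k]) (use st False in auto)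
  show ?thesis using ij(9) by (intro that[OF ij(5-8) ij(1-4)]) (simp add: abs_minus_commute)
qed

lemma uinv_close:
  fixes M :: "'q::finite \<Rightarrow> nat"
  assumes pd: "partition_data M xs"
    and xy: "x \<in> unit_cube" "y \<in> unit_cube" "dist x y < min_ratio M xs"
  obtains i j where "multi_index M i" "multi_index M j" "x \<in> cell xs i" "y \<in> cell xs j"
    "dist (uinv xs i x) (uinv xs j y) \<le> dist x y / min_ratio M xs"
proof -
  define a where "a = min_ratio M xs"
  define P where "P k i j \<longleftrightarrow> 1 \<le> i \<and> i \<le> M k \<and> xs k (i - 1) \<le> x $ k \<and> x $ k \<le> xs k i
     \<and> 1 \<le> j \<and> j \<le> M k \<and> xs k (j - 1) \<le> y $ k \<and> y $ k \<le> xs k j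
     \<and> \<bar>uk_inv xs k i (x $ k) - uk_inv xs k j (y $ k)\<bar> \<le> \<bar>x $ k - y $ k\<bar> / a" for k i j
  have "\<forall>k. \<exists>i j. P k i j"
  proof
    fix k
    have "\<bar>x $ k - y $ k\<bar> \<le> dist x y"
      using component_le_norm_cart[of "x - y" k] by (simp add: dist_norm)
    then have st: "0 \<le> x $ k" "x $ k \<le> 1" "0 \<le> y $ k" "y $ k \<le> 1" "\<bar>x $ k - y $ k\<bar> < a"
      using xy unfolding mem_unit_cube a_def by auto
    obtain i j where "1 \<le> i" "i \<le> M k" "xs k (i - 1) \<le> x $ k" "x $ k \<le> xs k i"
      "1 \<le> j" "j \<le> M k" "xs k (j - 1) \<le> y $ k" "y $ k \<le> xs k j"
      "\<bar>uk_inv xs k i (x $ k) - uk_inv xs k j (y $ k)\<bar> \<le> \<bar>x $ k - y $ k\<bar> / a"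
      using uk_inv_close[OF pd st[unfolded a_def]] unfolding a_def by blast
    then show "\<exists>i j. P k i j" unfolding P_def by blast
  qed
  then obtain i where "\<forall>k. \<exists>j. P k (i k) j" by (rule choice[THEN exE])
  then obtain j where ij: "\<forall>k. P k (i k) (j k)" by (rule choice[THEN exE])
  have a: "0 < a" unfolding a_def using min_ratio_pos[OF pd] .
  have "norm (uinv xs i x - uinv xs j y) \<le> norm ((1 / a) *\<^sub>R (x - y))"
    by (rule norm_le_componentwise_cart) (use ij a in \<open>simp add: uinv_component P_def\<close>)
  then have "dist (uinv xs i x) (uinv xs j y) \<le> dist x y / a"
    using a by (simp add: dist_norm)
  then show ?thesis using that[of i j] ij unfolding P_def cell_def a_def by auto
qed

section \<open>Hoelder continuity of the \<open>\<alpha>\<close>-fractal function\<close>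

lemma holder_onE:
  assumes "holder_on \<sigma> S h"
  obtains K where "0 \<le> K" "\<And>x y. x \<in> S \<Longrightarrow> y \<in> S \<Longrightarrow> \<bar>h x - h y\<bar> \<le> K * dist x y powr \<sigma>"
proof -
  obtain K where K: "\<forall>x\<in>S. \<forall>y\<in>S. \<bar>h x - h y\<bar> \<le> K * dist x y powr \<sigma>"
    using assms unfolding holder_on_def by blast
  have "\<bar>h x - h y\<bar> \<le> max K 0 * dist x y powr \<sigma>" if "x \<in> S" "y \<in> S" for x y
    using K that mult_right_mono[of K "max K 0" "dist x y powr \<sigma>"] by force
  then show ?thesis using that[of "max K 0"] by simp
qed

lemma holder_on_bounded:
  assumes "holder_on \<sigma> S h" "bounded S" "0 \<le> \<sigma>"
  obtains B where "\<And>x. x \<in> S \<Longrightarrow> \<bar>h x\<bar> \<le> B"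
proof (cases "S = {}")
  case False
  then obtain z where z: "z \<in> S" by blast
  obtain K where K: "0 \<le> K" "\<And>x y. x \<in> S \<Longrightarrow> y \<in> S \<Longrightarrow> \<bar>h x - h y\<bar> \<le> K * dist x y powr \<sigma>"
    using holder_onE[OF assms(1)] by blast
  obtain R where R: "\<And>x. x \<in> S \<Longrightarrow> dist z x \<le> R"
    using bounded_any_center assms(2) by blast
  have "\<bar>h x\<bar> \<le> \<bar>h z\<bar> + K * R powr \<sigma>" if x: "x \<in> S" for x
  proof -
    have "\<bar>h x - h z\<bar> \<le> K * dist x z powr \<sigma>" using K(2) x z by blast
    also have "\<dots> \<le> K * R powr \<sigma>"
      using R[OF x] K(1) assms(3) by (intro mult_left_mono powr_mono2) (auto simp: dist_commute)
    finally show ?thesis by linarith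
  qed
  then show ?thesis using that by blast
qed simp

lemma holder_contraction_step:
  fixes g :: "'a::metric_space \<Rightarrow> real"
  assumes \<sigma>: "0 < \<sigma>" and a: "0 < a" "a \<le> 1" and \<delta>: "0 < \<delta>"
    and bound: "\<And>x. x \<in> S \<Longrightarrow> \<bar>g x\<bar> \<le> B" and K: "0 \<le> K" and L: "0 \<le> L"
    and step: "\<And>u v. u \<in> S \<Longrightarrow> v \<in> S \<Longrightarrow> dist u v < a \<Longrightarrow> \<exists>u'\<in>S. \<exists>v'\<in>S.
       dist u' v' \<le> dist u v / a \<and> \<bar>g u - g v\<bar> \<le> K * dist u v powr \<sigma> + L * \<bar>g u' - g v'\<bar>"
    and \<Phi>: "0 \<le> \<Phi>" "\<And>u v. u \<in> S \<Longrightarrow> v \<in> S \<Longrightarrow> \<bar>g u - g v\<bar> \<le> \<Phi> * max (dist u v) \<delta> powr \<sigma>"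
    and uv: "u \<in> S" "v \<in> S"
  shows "\<bar>g u - g v\<bar> \<le> max (2 * B / a powr \<sigma>) (K + L / a powr \<sigma> * \<Phi>) * max (dist u v) \<delta> powr \<sigma>"
proof -
  define w where "w = max (dist u v) \<delta> powr \<sigma>"
  have w: "0 < w" using \<delta> unfolding w_def by simp
  have "\<bar>g u - g v\<bar> \<le> 2 * B / a powr \<sigma> * w \<or> \<bar>g u - g v\<bar> \<le> (K + L / a powr \<sigma> * \<Phi>) * w"
  proof (cases "a \<le> dist u v")
    case True
    have B: "0 \<le> B" using bound[OF uv(1)] by linarith
    have "a powr \<sigma> \<le> w" unfolding w_def using True a \<sigma> by (intro powr_mono2) auto
    have "\<bar>g u - g v\<bar> \<le> 2 * B" using bound[OF uv(1)] bound[OF uv(2)] by linarith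
    also have "\<dots> = 2 * B / a powr \<sigma> * a powr \<sigma>" using a by simp
    also have "\<dots> \<le> 2 * B / a powr \<sigma> * w"
      using \<open>a powr \<sigma> \<le> w\<close> B a by (intro mult_left_mono) auto
    finally show ?thesis ..
  next
    case False
    then obtain u' v' where u'v': "u' \<in> S" "v' \<in> S" "dist u' v' \<le> dist u v / a"
      and inc: "\<bar>g u - g v\<bar> \<le> K * dist u v powr \<sigma> + L * \<bar>g u' - g v'\<bar>"
      using step[OF uv] by auto
    have "\<delta> \<le> max (dist u v) \<delta> / a" using a \<delta> by (simp add: le_divide_eq max.coboundedI2)
    moreover have "dist u' v' \<le> max (dist u v) \<delta> / a"
      using u'v'(3) a by (simp add: divide_right_mono order_trans)
    ultimately have "max (dist u' v') \<delta> powr \<sigma> \<le> (max (dist u v) \<delta> / a) powr \<sigma>"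
      using \<delta> \<sigma> by (intro powr_mono2) auto
    also have "\<dots> = w / a powr \<sigma>" unfolding w_def using a \<delta> by (simp add: powr_divide)
    finally have "\<bar>g u' - g v'\<bar> \<le> \<Phi> * (w / a powr \<sigma>)"
      using \<Phi>(2)[OF u'v'(1,2)] \<Phi>(1) by (meson mult_left_mono order_trans)
    moreover have "dist u v powr \<sigma> \<le> w" unfolding w_def using \<sigma> by (intro powr_mono2) auto
    ultimately have "\<bar>g u - g v\<bar> \<le> K * w + L * (\<Phi> * (w / a powr \<sigma>))"
      using inc K L by (smt (verit) mult_left_mono)
    also have "\<dots> = (K + L / a powr \<sigma> * \<Phi>) * w" by (simp add: field_simps)
    finally show ?thesis ..
  qed
  then show ?thesis unfolding w_def[symmetric] using w by (smt (verit) max.cobounded1 max.cobounded2 mult_right_mono)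
qed

text \<open>The cut-off \<open>\<delta>\<close> makes the supremum \<open>\<Phi>\<close> of the regularised quotient finite; it satisfies
  \<open>\<Phi> \<le> max (2 B / a ^ \<sigma>) (K + \<rho> \<Phi>)\<close> with \<open>\<rho> = L / a ^ \<sigma> < 1\<close>, a bound independent of \<open>\<delta>\<close>.\<close>
lemma holder_contraction_bound:
  fixes g :: "'a::metric_space \<Rightarrow> real"
  assumes \<sigma>: "0 < \<sigma>" and a: "0 < a" "a \<le> 1" and \<delta>: "0 < \<delta>"
    and bound: "\<And>x. x \<in> S \<Longrightarrow> \<bar>g x\<bar> \<le> B" and K: "0 \<le> K" and L: "0 \<le> L" "L < a powr \<sigma>"
    and step: "\<And>u v. u \<in> S \<Longrightarrow> v \<in> S \<Longrightarrow> dist u v < a \<Longrightarrow> \<exists>u'\<in>S. \<exists>v'\<in>S.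
       dist u' v' \<le> dist u v / a \<and> \<bar>g u - g v\<bar> \<le> K * dist u v powr \<sigma> + L * \<bar>g u' - g v'\<bar>"
    and xy: "x \<in> S" "y \<in> S"
  shows "\<bar>g x - g y\<bar> \<le> max (2 * B / a powr \<sigma>) (K / (1 - L / a powr \<sigma>)) * max (dist x y) \<delta> powr \<sigma>"
proof -
  define r where "r = (\<lambda>(u, v). \<bar>g u - g v\<bar> / max (dist u v) \<delta> powr \<sigma>)"
  define \<Phi> where "\<Phi> = (SUP p\<in>S \<times> S. r p)"
  define \<rho> where "\<rho> = L / a powr \<sigma>"
  have \<rho>: "\<rho> < 1" unfolding \<rho>_def using L a by (simp add: divide_less_eq)
  have wpos: "0 < max (dist u v) \<delta> powr \<sigma>" for u v using \<delta> by simp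
  have "r p \<le> 2 * B / \<delta> powr \<sigma>" if pS: "p \<in> S \<times> S" for p
  proof -
    obtain u v where p: "p = (u, v)" "u \<in> S" "v \<in> S" using pS by blast
    have "\<bar>g u - g v\<bar> \<le> 2 * B" using bound[OF p(2)] bound[OF p(3)] by linarith
    moreover have "\<delta> powr \<sigma> \<le> max (dist u v) \<delta> powr \<sigma>" using \<delta> \<sigma> by (intro powr_mono2) auto
    ultimately show ?thesis unfolding r_def p(1) using \<delta> by (simp add: frac_le)
  qed
  then have bdd: "bdd_above (r ` (S \<times> S))" by (rule bdd_aboveI2)
  have quot: "\<bar>g u - g v\<bar> \<le> \<Phi> * max (dist u v) \<delta> powr \<sigma>" if "u \<in> S" "v \<in> S" for u v
  proof -
    have "r (u, v) \<le> \<Phi>" unfolding \<Phi>_def using bdd that by (intro cSUP_upper) auto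
    then show ?thesis unfolding r_def using wpos[of u v] by (simp add: divide_le_eq)
  qed
  have \<Phi>0: "0 \<le> \<Phi>" using quot[OF xy(1) xy(1)] \<delta> by (simp add: zero_le_mult_iff)
  have "r p \<le> max (2 * B / a powr \<sigma>) (K + \<rho> * \<Phi>)" if pS: "p \<in> S \<times> S" for p
  proof -
    obtain u v where p: "p = (u, v)" "u \<in> S" "v \<in> S" using pS by blast
    show ?thesis
      using holder_contraction_step[OF \<sigma> a \<delta> bound K L(1) step \<Phi>0 quot p(2,3)] wpos[of u v]
      unfolding r_def p(1) \<rho>_def by (simp add: divide_le_eq)
  qed
  then have \<Phi>_le: "\<Phi> \<le> max (2 * B / a powr \<sigma>) (K + \<rho> * \<Phi>)"
    unfolding \<Phi>_def using xy by (intro cSUP_least) auto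
  have "\<Phi> \<le> max (2 * B / a powr \<sigma>) (K / (1 - \<rho>))"
  proof (cases "\<Phi> \<le> 2 * B / a powr \<sigma>")
    case False
    then have "\<Phi> * (1 - \<rho>) \<le> K" using \<Phi>_le by (simp add: algebra_simps)
    then have "\<Phi> \<le> K / (1 - \<rho>)" using \<rho> by (simp add: le_divide_eq)
    then show ?thesis by simp
  qed simp
  then show ?thesis
    using quot[OF xy] wpos[of x y] unfolding \<rho>_def by (smt (verit) mult_right_mono)
qed

lemma holder_on_by_contraction:
  fixes g :: "'a::metric_space \<Rightarrow> real"
  assumes \<sigma>: "0 < \<sigma>" and a: "0 < a" "a \<le> 1"
    and bound: "\<And>x. x \<in> S \<Longrightarrow> \<bar>g x\<bar> \<le> B" and K: "0 \<le> K" and L: "0 \<le> L" "L < a powr \<sigma>"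
    and step: "\<And>u v. u \<in> S \<Longrightarrow> v \<in> S \<Longrightarrow> dist u v < a \<Longrightarrow> \<exists>u'\<in>S. \<exists>v'\<in>S.
       dist u' v' \<le> dist u v / a \<and> \<bar>g u - g v\<bar> \<le> K * dist u v powr \<sigma> + L * \<bar>g u' - g v'\<bar>"
  shows "holder_on \<sigma> S g"
proof -
  define C where "C = max (2 * B / a powr \<sigma>) (K / (1 - L / a powr \<sigma>))"
  have "\<bar>g x - g y\<bar> \<le> C * dist x y powr \<sigma>" if "x \<in> S" "y \<in> S" for x y
  proof (cases "x = y")
    case False
    then show ?thesis
      using holder_contraction_bound[OF \<sigma> a _ bound K L step that, of "dist x y"] unfolding C_def by simp
  qed simp
  then show ?thesis unfolding holder_on_def by blast
qed

lemma alpha_fractal_bounded: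
  assumes "is_alpha_fractal M xs f \<alpha> s g"
  obtains B where "\<And>x. x \<in> unit_cube \<Longrightarrow> \<bar>g x\<bar> \<le> B"
proof -
  have "continuous_on unit_cube g" using assms unfolding is_alpha_fractal_def by blast
  then have "bounded (g ` unit_cube)" by (intro compact_imp_bounded compact_continuous_image compact_unit_cube)
  then show ?thesis using that unfolding bounded_iff by auto
qed

lemma abs_triangle_ineq_sum_prod:
  fixes p q r t x y :: real
  shows "\<bar>p + q * r + t * (x - y)\<bar> \<le> \<bar>p\<bar> + \<bar>q\<bar> * \<bar>r\<bar> + \<bar>t\<bar> * (\<bar>x\<bar> + \<bar>y\<bar>)"
proof -
  have "\<bar>t * (x - y)\<bar> \<le> \<bar>t\<bar> * (\<bar>x\<bar> + \<bar>y\<bar>)"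
    unfolding abs_mult by (intro mult_left_mono abs_triangle_ineq4) simp
  moreover have "\<bar>p + q * r\<bar> \<le> \<bar>p\<bar> + \<bar>q\<bar> * \<bar>r\<bar>"
    using abs_triangle_ineq[of p "q * r"] by (simp add: abs_mult)
  ultimately show ?thesis using abs_triangle_ineq[of "p + q * r" "t * (x - y)"] by linarith
qed

lemma alpha_fractal_increment_eq:
  assumes frac: "is_alpha_fractal M xs f \<alpha> s g"
    and ij: "multi_index M i" "multi_index M j" "u \<in> cell xs i" "v \<in> cell xs j"
  shows "g u - g v = (f u - f v) + (\<alpha> u - \<alpha> v) * (g (uinv xs i u) - s (uinv xs i u))
    + \<alpha> v * ((g (uinv xs i u) - g (uinv xs j v)) - (s (uinv xs i u) - s (uinv xs j v)))"
proof -
  have "g u = f u + \<alpha> u * (g (uinv xs i u) - s (uinv xs i u))"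
    "g v = f v + \<alpha> v * (g (uinv xs j v) - s (uinv xs j v))"
    using frac ij unfolding is_alpha_fractal_def by blast+
  then show ?thesis by (simp add: algebra_simps)
qed

lemma alpha_fractal_increment:
  fixes M :: "'q::finite \<Rightarrow> nat" and g :: "real^'q \<Rightarrow> real"
  assumes pd: "partition_data M xs" and \<sigma>: "0 < \<sigma>"
    and hf: "holder_on \<sigma> unit_cube f" and ha: "holder_on \<sigma> unit_cube \<alpha>"
    and hs: "holder_on \<sigma> unit_cube s" and A: "\<And>x. x \<in> unit_cube \<Longrightarrow> \<bar>\<alpha> x\<bar> \<le> A"
    and frac: "is_alpha_fractal M xs f \<alpha> s g"
  obtains K where "0 \<le> K"
    "\<And>u v. u \<in> unit_cube \<Longrightarrow> v \<in> unit_cube \<Longrightarrow> dist u v < min_ratio M xs \<Longrightarrow>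
      \<exists>u'\<in>unit_cube. \<exists>v'\<in>unit_cube. dist u' v' \<le> dist u v / min_ratio M xs \<and>
        \<bar>g u - g v\<bar> \<le> K * dist u v powr \<sigma> + A * \<bar>g u' - g v'\<bar>"
proof -
  define a where "a = min_ratio M xs"
  have a: "0 < a" unfolding a_def using min_ratio_pos[OF pd] .
  obtain Kf where Kf: "0 \<le> Kf" "\<And>x y. x \<in> unit_cube \<Longrightarrow> y \<in> unit_cube \<Longrightarrow> \<bar>f x - f y\<bar> \<le> Kf * dist x y powr \<sigma>"
    using holder_onE[OF hf] by blast
  obtain Ka where Ka: "0 \<le> Ka" "\<And>x y. x \<in> unit_cube \<Longrightarrow> y \<in> unit_cube \<Longrightarrow> \<bar>\<alpha> x - \<alpha> y\<bar> \<le> Ka * dist x y powr \<sigma>"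
    using holder_onE[OF ha] by blast
  obtain Ks where Ks: "0 \<le> Ks" "\<And>x y. x \<in> unit_cube \<Longrightarrow> y \<in> unit_cube \<Longrightarrow> \<bar>s x - s y\<bar> \<le> Ks * dist x y powr \<sigma>"
    using holder_onE[OF hs] by blast
  obtain Bs where Bs: "\<And>x. x \<in> unit_cube \<Longrightarrow> \<bar>s x\<bar> \<le> Bs"
    using holder_on_bounded[OF hs bounded_unit_cube less_imp_le[OF \<sigma>]] by blast
  obtain Bg where Bg: "\<And>x. x \<in> unit_cube \<Longrightarrow> \<bar>g x\<bar> \<le> Bg"
    using alpha_fractal_bounded[OF frac] by blast
  have A0: "0 \<le> A" using A[OF zero_mem_unit_cube] by linarith
  define K where "K = Kf + Ka * (Bg + Bs) + A * Ks / a powr \<sigma>"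
  have "\<exists>u'\<in>unit_cube. \<exists>v'\<in>unit_cube. dist u' v' \<le> dist u v / a \<and>
      \<bar>g u - g v\<bar> \<le> K * dist u v powr \<sigma> + A * \<bar>g u' - g v'\<bar>"
    if uv: "u \<in> unit_cube" "v \<in> unit_cube" "dist u v < a" for u v
  proof -
    obtain i j where ij: "multi_index M i" "multi_index M j" "u \<in> cell xs i" "v \<in> cell xs j"
      and close: "dist (uinv xs i u) (uinv xs j v) \<le> dist u v / a"
      using uinv_close[OF pd uv[unfolded a_def]] unfolding a_def by blast
    define u' where "u' = uinv xs i u"
    define v' where "v' = uinv xs j v"
    have u': "u' \<in> unit_cube" unfolding u'_def using uinv_mem_unit_cube[OF pd ij(1,3)] .
    have v': "v' \<in> unit_cube" unfolding v'_def using uinv_mem_unit_cube[OF pd ij(2,4)] .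
    have eq: "g u - g v = (f u - f v) + (\<alpha> u - \<alpha> v) * (g u' - s u') + \<alpha> v * ((g u' - g v') - (s u' - s v'))"
      unfolding u'_def v'_def by (rule alpha_fractal_increment_eq[OF frac ij])
    have "\<bar>g u - g v\<bar> \<le> \<bar>f u - f v\<bar> + \<bar>\<alpha> u - \<alpha> v\<bar> * \<bar>g u' - s u'\<bar> + \<bar>\<alpha> v\<bar> * (\<bar>g u' - g v'\<bar> + \<bar>s u' - s v'\<bar>)"
      unfolding eq by (rule abs_triangle_ineq_sum_prod)
    also have "\<dots> \<le> Kf * dist u v powr \<sigma> + Ka * dist u v powr \<sigma> * (Bg + Bs)
        + A * (\<bar>g u' - g v'\<bar> + Ks * (dist u v / a) powr \<sigma>)"
    proof -
      have "\<bar>g u' - s u'\<bar> \<le> Bg + Bs" using Bg[OF u'] Bs[OF u'] by linarith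
      moreover have "dist u' v' powr \<sigma> \<le> (dist u v / a) powr \<sigma>"
        using close \<sigma> unfolding u'_def v'_def by (intro powr_mono2) auto
      then have "\<bar>s u' - s v'\<bar> \<le> Ks * (dist u v / a) powr \<sigma>"
        using Ks(2)[OF u' v'] Ks(1) by (meson mult_left_mono order_trans)
      ultimately show ?thesis
        using Kf(2)[OF uv(1,2)] Ka(1) Ka(2)[OF uv(1,2)] A[OF uv(2)] A0
        by (intro add_mono mult_mono) auto
    qed
    also have "\<dots> = K * dist u v powr \<sigma> + A * \<bar>g u' - g v'\<bar>"
      unfolding K_def using a by (simp add: powr_divide field_simps)
    finally show ?thesis using u' v' close unfolding u'_def v'_def by blast
  qed
  moreover have "0 \<le> K"
    unfolding K_def using Kf(1) Ka(1) Ks(1) A0 Bg[OF zero_mem_unit_cube] Bs[OF zero_mem_unit_cube]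
    by (intro add_nonneg_nonneg mult_nonneg_nonneg divide_nonneg_nonneg) auto
  ultimately show ?thesis using that unfolding a_def by blast
qed

lemma holder_on_alpha_fractal:
  fixes M :: "'q::finite \<Rightarrow> nat" and g :: "real^'q \<Rightarrow> real"
  assumes pd: "partition_data M xs" and \<sigma>: "0 < \<sigma>"
    and hf: "holder_on \<sigma> unit_cube f" and ha: "holder_on \<sigma> unit_cube \<alpha>"
    and hs: "holder_on \<sigma> unit_cube s"
    and small: "sup_norm_on unit_cube \<alpha> / min_ratio M xs powr \<sigma> < 1"
    and frac: "is_alpha_fractal M xs f \<alpha> s g"
  shows "holder_on \<sigma> unit_cube g"
proof -
  define A where "A = sup_norm_on unit_cube \<alpha>"
  obtain C where "\<And>x. x \<in> unit_cube \<Longrightarrow> \<bar>\<alpha> x\<bar> \<le> C"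
    using holder_on_bounded[OF ha bounded_unit_cube less_imp_le[OF \<sigma>]] by blast
  then have A: "\<bar>\<alpha> x\<bar> \<le> A" if "x \<in> unit_cube" for x
    unfolding A_def sup_norm_on_def using that by (intro cSUP_upper bdd_aboveI2) auto
  have "A < min_ratio M xs powr \<sigma>" using small min_ratio_pos[OF pd] unfolding A_def by (simp add: divide_less_eq)
  moreover have "0 \<le> A" using A[OF zero_mem_unit_cube] by linarith
  moreover obtain B where "\<And>x. x \<in> unit_cube \<Longrightarrow> \<bar>g x\<bar> \<le> B"
    using alpha_fractal_bounded[OF frac] by blast
  moreover obtain K where "0 \<le> K"
    "\<And>u v. u \<in> unit_cube \<Longrightarrow> v \<in> unit_cube \<Longrightarrow> dist u v < min_ratio M xs \<Longrightarrow>
      \<exists>u'\<in>unit_cube. \<exists>v'\<in>unit_cube. dist u' v' \<le> dist u v / min_ratio M xs \<and>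
        \<bar>g u - g v\<bar> \<le> K * dist u v powr \<sigma> + A * \<bar>g u' - g v'\<bar>"
    using alpha_fractal_increment[OF pd \<sigma> hf ha hs A frac] by blast
  ultimately show ?thesis
    using holder_on_by_contraction[OF \<sigma> min_ratio_pos[OF pd] min_ratio_le_1[OF pd]] by blast
qed

section \<open>Box-counting dimension of Hoelder graphs\<close>

lemma card_floor_image_le:
  fixes g :: "'a \<Rightarrow> real"
  assumes c: "0 < c" and R: "0 \<le> R" and osc: "\<And>x y. x \<in> T \<Longrightarrow> y \<in> T \<Longrightarrow> \<bar>g x - g y\<bar> \<le> R"
  shows "finite ((\<lambda>x. \<lfloor>c * g x\<rfloor>) ` T)" "real (card ((\<lambda>x. \<lfloor>c * g x\<rfloor>) ` T)) \<le> 2 * c * R + 2"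
proof -
  have "finite ((\<lambda>x. \<lfloor>c * g x\<rfloor>) ` T) \<and> real (card ((\<lambda>x. \<lfloor>c * g x\<rfloor>) ` T)) \<le> 2 * c * R + 2"
  proof (cases "T = {}")
    case False
    then obtain x0 where x0: "x0 \<in> T" by blast
    define lo where "lo = \<lfloor>c * (g x0 - R)\<rfloor>"
    define hi where "hi = \<lfloor>c * (g x0 + R)\<rfloor>"
    have sub: "(\<lambda>x. \<lfloor>c * g x\<rfloor>) ` T \<subseteq> {lo..hi}"
    proof clarify
      fix x assume "x \<in> T"
      then have "g x0 - R \<le> g x" "g x \<le> g x0 + R" using osc[OF _ x0, of x] by auto
      then show "\<lfloor>c * g x\<rfloor> \<in> {lo..hi}"
        unfolding lo_def hi_def using c by (auto intro!: floor_mono mult_left_mono)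
    qed
    have "real_of_int hi - real_of_int lo \<le> c * (g x0 + R) - (c * (g x0 - R) - 1)"
      unfolding lo_def hi_def by linarith
    then have "real_of_int hi - real_of_int lo \<le> 2 * c * R + 1" by (simp add: algebra_simps)
    moreover have "lo \<le> hi" unfolding lo_def hi_def using c R by (intro floor_mono) simp
    moreover have "card ((\<lambda>x. \<lfloor>c * g x\<rfloor>) ` T) \<le> nat (hi - lo + 1)"
      using card_mono[OF _ sub] by simp
    then have "real (card ((\<lambda>x. \<lfloor>c * g x\<rfloor>) ` T)) \<le> real (nat (hi - lo + 1))" by linarith
    ultimately show ?thesis using finite_subset[OF sub] by simp
  qed (use c R in simp)
  then show "finite ((\<lambda>x. \<lfloor>c * g x\<rfloor>) ` T)" "real (card ((\<lambda>x. \<lfloor>c * g x\<rfloor>) ` T)) \<le> 2 * c * R + 2"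
    by blast+
qed

definition grid_cell :: "nat \<Rightarrow> ('q::finite \<Rightarrow> nat) \<Rightarrow> (real^'q) set" where
  "grid_cell n z = cbox (\<chi> k. real (z k) / n) (\<chi> k. (real (z k) + 1) / n)"

lemma mem_grid_cell: "x \<in> grid_cell n z \<longleftrightarrow> (\<forall>k. real (z k) / n \<le> x $ k \<and> x $ k \<le> (real (z k) + 1) / n)"
  unfolding grid_cell_def by (simp add: mem_box_cart)

lemma dist_le_card_mult:
  fixes x y :: "real^'q::finite"
  assumes "\<And>k. \<bar>x $ k - y $ k\<bar> \<le> h"
  shows "dist x y \<le> real CARD('q) * h"
proof -
  have "dist x y \<le> (\<Sum>k\<in>UNIV. \<bar>(x - y) $ k\<bar>)" unfolding dist_norm by (rule norm_le_l1_cart)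
  also have "\<dots> \<le> (\<Sum>k\<in>(UNIV::'q set). h)" using assms by (intro sum_mono) simp
  finally show ?thesis by simp
qed

lemma grid_cell_dist_le:
  fixes x y :: "real^'q::finite"
  assumes "x \<in> grid_cell n z" "y \<in> grid_cell n z"
  shows "dist x y \<le> real CARD('q) / n"
proof -
  have "\<bar>x $ k - y $ k\<bar> \<le> 1 / n" for k
  proof -
    have "real (z k) / n \<le> x $ k" "x $ k \<le> real (z k) / n + 1 / n"
      "real (z k) / n \<le> y $ k" "y $ k \<le> real (z k) / n + 1 / n"
      using assms unfolding mem_grid_cell add_divide_distrib by blast+
    then show ?thesis by linarith
  qed
  then show ?thesis using dist_le_card_mult[of x y "1 / n"] by simp
qed

lemma unit_cube_subset_grid_cells:
  assumes n: "0 < n"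
  shows "unit_cube \<subseteq> (\<Union>z\<in>PiE UNIV (\<lambda>_. {..<n}). grid_cell n (z :: 'q::finite \<Rightarrow> nat))"
proof
  fix x :: "real^'q" assume "x \<in> unit_cube"
  then have x: "0 \<le> x $ k" "x $ k \<le> 1" for k unfolding mem_unit_cube by auto
  define z where "z k = min (nat \<lfloor>x $ k * n\<rfloor>) (n - 1)" for k
  have "real (z k) / n \<le> x $ k \<and> x $ k \<le> (real (z k) + 1) / n" for k
  proof -
    have fl: "real (nat \<lfloor>x $ k * n\<rfloor>) = of_int \<lfloor>x $ k * n\<rfloor>" using x[of k] by simp
    have "real (z k) \<le> x $ k * n" unfolding z_def using fl by linarith
    moreover have "x $ k * n \<le> real (z k) + 1"
    proof (cases "nat \<lfloor>x $ k * n\<rfloor> \<le> n - 1")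
      case True
      then show ?thesis unfolding z_def using fl by linarith
    next
      case False
      then have "real (z k) + 1 = real n" unfolding z_def using n by simp
      moreover have "x $ k * n \<le> real n" using mult_right_mono[OF x(2), of "real n"] by simp
      ultimately show ?thesis by linarith
    qed
    ultimately show ?thesis using n by (simp add: field_simps)
  qed
  moreover have "z \<in> PiE UNIV (\<lambda>_. {..<n})" unfolding z_def using n by auto
  ultimately show "x \<in> (\<Union>z\<in>PiE UNIV (\<lambda>_. {..<n}). grid_cell n z)"
    by (intro UN_I) (auto simp: mem_grid_cell)
qed

lemma grid_box_diameter_le:
  fixes z :: "'q::finite \<Rightarrow> nat" and j :: int
  assumes n: "0 < n"
  shows "bounded (grid_cell n z \<times> {real_of_int j / n .. (real_of_int j + 1) / n})"
    and "diameter (grid_cell n z \<times> {real_of_int j / n .. (real_of_int j + 1) / n}) \<le> (real CARD('q) + 1) / n"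
proof -
  show bd: "bounded (grid_cell n z \<times> {real_of_int j / n .. (real_of_int j + 1) / n})"
    unfolding grid_cell_def by (intro bounded_Times bounded_cbox) simp
  have "norm (p1 - p2) \<le> (real CARD('q) + 1) / n"
    if "p1 \<in> grid_cell n z \<times> {real_of_int j / n .. (real_of_int j + 1) / n}"
      "p2 \<in> grid_cell n z \<times> {real_of_int j / n .. (real_of_int j + 1) / n}" for p1 p2
  proof -
    have "norm (fst p1 - fst p2) \<le> real CARD('q) / n"
      using grid_cell_dist_le that by (auto simp: dist_norm)
    moreover have "\<bar>snd p1 - snd p2\<bar> \<le> 1 / n"
      using that by (auto simp: abs_le_iff add_divide_distrib)
    moreover have "norm (p1 - p2) \<le> norm (fst p1 - fst p2) + norm (snd p1 - snd p2)"
      using norm_Pair_le[of "fst p1 - fst p2" "snd p1 - snd p2"] by (metis fst_diff snd_diff prod.collapse)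
    ultimately show ?thesis by (simp add: add_divide_distrib)
  qed
  then show "diameter (grid_cell n z \<times> {real_of_int j / n .. (real_of_int j + 1) / n}) \<le> (real CARD('q) + 1) / n"
    using n by (intro diameter_le) (auto simp: dist_norm)
qed

lemma graph_grid_cover:
  fixes g :: "real^'q::finite \<Rightarrow> real"
  assumes K: "0 \<le> K" "\<And>x y. x \<in> unit_cube \<Longrightarrow> y \<in> unit_cube \<Longrightarrow> \<bar>g x - g y\<bar> \<le> K * dist x y powr \<sigma>"
    and \<sigma>: "0 < \<sigma>" and n: "0 < n"
  obtains F where "finite F" "graph_of unit_cube g \<subseteq> \<Union>F"
    "\<And>U. U \<in> F \<Longrightarrow> bounded U \<and> diameter U \<le> (real CARD('q) + 1) / n"
    "real (card F) \<le> real n ^ CARD('q) * (2 * n * (K * (real CARD('q) / n) powr \<sigma>) + 2)"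
proof -
  define Z where "Z = PiE (UNIV :: 'q set) (\<lambda>_. {..<n})"
  define J where "J z = (\<lambda>x. \<lfloor>n * g x\<rfloor>) ` (unit_cube \<inter> grid_cell n z)" for z
  define B where "B (z :: 'q \<Rightarrow> nat) j = grid_cell n z \<times> {real_of_int j / n .. (real_of_int j + 1) / n}" for z j
  define F where "F = (\<Union>z\<in>Z. B z ` J z)"
  define R where "R = K * (real CARD('q) / n) powr \<sigma>"
  have osc: "\<bar>g x - g y\<bar> \<le> R" if "x \<in> unit_cube \<inter> grid_cell n z" "y \<in> unit_cube \<inter> grid_cell n z" for x y z
  proof -
    have "dist x y powr \<sigma> \<le> (real CARD('q) / n) powr \<sigma>"
      using grid_cell_dist_le[of x n z y] that \<sigma> by (intro powr_mono2) auto
    then have "K * dist x y powr \<sigma> \<le> R" unfolding R_def using K(1) by (rule mult_left_mono)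
    moreover have "\<bar>g x - g y\<bar> \<le> K * dist x y powr \<sigma>" using K(2) that by blast
    ultimately show ?thesis by linarith
  qed
  have R: "0 \<le> R" unfolding R_def using K(1) by simp
  have J: "finite (J z)" "real (card (J z)) \<le> 2 * real n * R + 2" for z
    using card_floor_image_le[of "real n" R "unit_cube \<inter> grid_cell n z" g, OF _ R osc[where z = z]] n
    unfolding J_def by simp_all
  have Z: "finite Z" "card Z = n ^ CARD('q)" unfolding Z_def by (simp_all add: card_PiE finite_PiE)
  have "card F \<le> (\<Sum>z\<in>Z. card (B z ` J z))" unfolding F_def using Z(1) by (rule card_UN_le)
  also have "\<dots> \<le> (\<Sum>z\<in>Z. card (J z))" by (intro sum_mono card_image_le J(1))
  finally have "real (card F) \<le> (\<Sum>z\<in>Z. real (card (J z)))" by (metis of_nat_le_iff of_nat_sum)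
  also have "\<dots> \<le> (\<Sum>z\<in>Z. 2 * real n * R + 2)" using J(2) by (rule sum_mono)
  finally have card: "real (card F) \<le> real n ^ CARD('q) * (2 * real n * R + 2)" using Z(2) by simp
  have cover: "graph_of unit_cube g \<subseteq> \<Union>F"
  proof
    fix p assume "p \<in> graph_of unit_cube g"
    then obtain x where x: "x \<in> unit_cube" and p: "p = (x, g x)" unfolding graph_of_def by blast
    then obtain z where z: "z \<in> Z" "x \<in> grid_cell n z"
      using unit_cube_subset_grid_cells[OF n] unfolding Z_def by blast
    define j where "j = \<lfloor>n * g x\<rfloor>"
    have "j \<in> J z" unfolding J_def j_def using x z by blast
    moreover have "real_of_int j \<le> n * g x" "n * g x < real_of_int j + 1" unfolding j_def by linarith+
    then have "g x \<in> {real_of_int j / n .. (real_of_int j + 1) / n}" using n by (simp add: field_simps)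
    then have "p \<in> B z j" unfolding B_def p using z(2) by simp
    ultimately show "p \<in> \<Union>F" unfolding F_def using z(1) by blast
  qed
  have diam: "bounded U \<and> diameter U \<le> (real CARD('q) + 1) / n" if "U \<in> F" for U
  proof -
    obtain z j where "U = B z j" using \<open>U \<in> F\<close> unfolding F_def by blast
    then show ?thesis unfolding B_def using grid_box_diameter_le[OF n, of z j] by simp
  qed
  have "finite F" unfolding F_def using Z(1) J(1) by blast
  from that[OF this cover diam card[unfolded R_def]] show ?thesis by blast
qed

lemma cover_number_le:
  assumes "finite F" "E \<subseteq> \<Union>F" "\<And>U. U \<in> F \<Longrightarrow> bounded U \<and> diameter U \<le> \<delta>"
  shows "cover_number \<delta> E \<le> card F"
  unfolding cover_number_def by (rule Least_le) (use assms in \<open>intro exI[of _ F], auto\<close>)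

lemma cover_number_attained:
  assumes "finite F" "E \<subseteq> \<Union>F" "\<And>U. U \<in> F \<Longrightarrow> bounded U \<and> diameter U \<le> \<delta>"
  obtains F' where "finite F'" "card F' = cover_number \<delta> E" "E \<subseteq> \<Union>F'"
    "\<And>U. U \<in> F' \<Longrightarrow> bounded U \<and> diameter U \<le> \<delta>"
proof -
  have "\<exists>n F'. finite F' \<and> card F' = n \<and> E \<subseteq> \<Union>F' \<and> (\<forall>U\<in>F'. bounded U \<and> diameter U \<le> \<delta>)"
    using assms by (intro exI[of _ "card F"] exI[of _ F]) auto
  then have "\<exists>F'. finite F' \<and> card F' = cover_number \<delta> E \<and> E \<subseteq> \<Union>F' \<and> (\<forall>U\<in>F'. bounded U \<and> diameter U \<le> \<delta>)"
    unfolding cover_number_def by (rule LeastI_ex)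
  then show ?thesis using that by auto
qed

lemma holder_graph_finite_cover:
  fixes g :: "real^'q::finite \<Rightarrow> real"
  assumes K: "0 \<le> K" "\<And>x y. x \<in> unit_cube \<Longrightarrow> y \<in> unit_cube \<Longrightarrow> \<bar>g x - g y\<bar> \<le> K * dist x y powr \<sigma>"
    and \<sigma>: "0 < \<sigma>" and \<delta>: "0 < \<delta>"
  shows "\<exists>F. finite F \<and> graph_of unit_cube g \<subseteq> \<Union>F \<and> (\<forall>U\<in>F. bounded U \<and> diameter U \<le> \<delta>)"
proof -
  define n where "n = nat \<lceil>(real CARD('q) + 1) / \<delta>\<rceil>"
  have le: "(real CARD('q) + 1) / \<delta> \<le> real n" unfolding n_def by linarith
  moreover have "0 < (real CARD('q) + 1) / \<delta>" using \<delta> by simp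
  ultimately have n: "0 < n" by linarith
  have small: "(real CARD('q) + 1) / n \<le> \<delta>" using le n \<delta> by (simp add: pos_divide_le_eq mult.commute)
  obtain F where F: "finite F" "graph_of unit_cube g \<subseteq> \<Union>F"
    "\<And>U. U \<in> F \<Longrightarrow> bounded U \<and> diameter U \<le> (real CARD('q) + 1) / n"
    "real (card F) \<le> real n ^ CARD('q) * (2 * real n * (K * (real CARD('q) / real n) powr \<sigma>) + 2)"
    using graph_grid_cover[OF K \<sigma> n] by blast
  have "\<forall>U\<in>F. bounded U \<and> diameter U \<le> \<delta>" using F(3) small by (meson order_trans)
  then show ?thesis using F(1,2) by blast
qed

lemma cover_number_holder_graph_le:
  fixes g :: "real^'q::finite \<Rightarrow> real"
  assumes K: "0 \<le> K" "\<And>x y. x \<in> unit_cube \<Longrightarrow> y \<in> unit_cube \<Longrightarrow> \<bar>g x - g y\<bar> \<le> K * dist x y powr \<sigma>"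
    and \<sigma>: "0 < \<sigma>" "\<sigma> \<le> 1" and \<delta>: "0 < \<delta>" "\<delta> \<le> 1"
  shows "real (cover_number \<delta> (graph_of unit_cube g)) \<le>
    (2 * K * real CARD('q) powr \<sigma> + 2) * (2 * (real CARD('q) + 1)) powr (real CARD('q) + 1 - \<sigma>)
      * \<delta> powr - (real CARD('q) + 1 - \<sigma>)"
proof -
  define q where "q = real CARD('q)"
  define D where "D = q + 1 - \<sigma>"
  define c where "c = 2 * K * q powr \<sigma> + 2"
  define n where "n = nat \<lceil>(q + 1) / \<delta>\<rceil>"
  have q1: "1 \<le> (q + 1) / \<delta>" using \<delta> by (simp add: q_def field_simps)
  have n: "(q + 1) / \<delta> \<le> real n" "real n \<le> 2 * (q + 1) / \<delta>"
    unfolding n_def using q1 by linarith+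
  then have n0: "0 < n" using q1 by linarith
  have "(q + 1) / n \<le> \<delta>" using n(1) n0 \<delta> by (simp add: pos_divide_le_eq mult.commute)
  obtain F where F: "finite F" "graph_of unit_cube g \<subseteq> \<Union>F"
    "\<And>U. U \<in> F \<Longrightarrow> bounded U \<and> diameter U \<le> (q + 1) / n"
    "real (card F) \<le> real n ^ CARD('q) * (2 * real n * (K * (q / real n) powr \<sigma>) + 2)"
    using graph_grid_cover[OF K \<sigma>(1) n0, folded q_def] by blast
  have "cover_number \<delta> (graph_of unit_cube g) \<le> card F"
    using F(3) \<open>(q + 1) / n \<le> \<delta>\<close> by (intro cover_number_le[OF F(1,2)]) (meson order_trans)
  then have "real (cover_number \<delta> (graph_of unit_cube g)) \<le> real (card F)" by simp
  also have "\<dots> \<le> n powr q * (2 * K * q powr \<sigma> * n powr (1 - \<sigma>) + 2)"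
  proof -
    have "2 * real n * (K * (q / real n) powr \<sigma>) = 2 * K * (real n * (q / real n) powr \<sigma>)"
      by (simp add: mult_ac)
    also have "\<dots> = 2 * K * q powr \<sigma> * n powr (1 - \<sigma>)"
      using n0 by (simp add: q_def powr_divide powr_diff)
    finally have e: "2 * real n * (K * (q / real n) powr \<sigma>) = 2 * K * q powr \<sigma> * n powr (1 - \<sigma>)" .
    have "real n ^ CARD('q) = n powr q" using n0 by (simp add: q_def powr_realpow)
    then show ?thesis using F(4) unfolding e by simp
  qed
  also have "\<dots> \<le> n powr q * (c * n powr (1 - \<sigma>))"
  proof -
    have "1 \<le> n powr (1 - \<sigma>)" using n0 \<sigma> by (intro ge_one_powr_ge_zero) auto
    then show ?thesis unfolding c_def using K(1) by (intro mult_left_mono) (auto simp: algebra_simps)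
  qed
  also have "\<dots> = c * n powr D" unfolding D_def by (simp add: powr_add[symmetric] algebra_simps)
  also have "\<dots> \<le> c * (2 * (q + 1) / \<delta>) powr D"
    using n n0 \<sigma> K(1) unfolding D_def c_def q_def by (intro mult_left_mono powr_mono2) auto
  also have "\<dots> = c * (2 * (q + 1)) powr D * \<delta> powr - D"
    using \<delta> by (simp add: powr_divide powr_minus_divide q_def)
  finally show ?thesis unfolding c_def D_def q_def .
qed

lemma ln_ratio_le_of_le_powr:
  fixes N :: nat
  assumes C: "1 \<le> C" and D: "0 \<le> D" and \<delta>: "0 < \<delta>" "\<delta> < 1" and N: "real N \<le> C * \<delta> powr - D"
  shows "ln (real N) / - ln \<delta> \<le> D + ln C / - ln \<delta>"
proof (cases "N = 0")
  case True
  have "0 \<le> ln C / - ln \<delta>" using C \<delta> by (intro divide_nonneg_pos) auto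
  then show ?thesis using True D by simp
next
  case False
  have L: "0 < - ln \<delta>" using \<delta> by simp
  have "ln (real N) \<le> ln (C * \<delta> powr - D)" using N C \<delta> False by simp
  also have "\<dots> = ln C + D * - ln \<delta>" using C \<delta> by (simp add: ln_mult ln_powr)
  finally show ?thesis using L by (simp add: field_simps)
qed

lemma upper_box_dim_le:
  assumes D: "0 \<le> D" and N: "\<And>\<delta>. 0 < \<delta> \<Longrightarrow> \<delta> < 1 \<Longrightarrow> real (cover_number \<delta> E) \<le> C * \<delta> powr - D"
  shows "upper_box_dim E \<le> ereal D"
proof (rule ereal_le_epsilon2)
  fix e :: real assume e: "0 < e"
  define C' where "C' = max C 1"
  have ratio: "ln (real (cover_number \<delta> E)) / - ln \<delta> \<le> D + ln C' / - ln \<delta>" if \<delta>: "0 < \<delta>" "\<delta> < 1" for \<delta>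
  proof -
    have "C * \<delta> powr - D \<le> C' * \<delta> powr - D" unfolding C'_def by (intro mult_right_mono) auto
    then have "real (cover_number \<delta> E) \<le> C' * \<delta> powr - D" using N[OF \<delta>] by linarith
    then show ?thesis using ln_ratio_le_of_le_powr[of C' D \<delta>] D \<delta> unfolding C'_def by simp
  qed
  define b where "b = min 1 (exp (- ln C' / e))"
  have "eventually (\<lambda>\<delta>. ereal (ln (real (cover_number \<delta> E)) / - ln \<delta>) \<le> ereal (D + e)) (at_right 0)"
  proof (rule eventually_mono[OF eventually_at_right_real])
    show "0 < b" unfolding b_def by simp
    fix \<delta> :: real assume "\<delta> \<in> {0<..<b}"
    then have \<delta>: "0 < \<delta>" "\<delta> < 1" "\<delta> < exp (- ln C' / e)" unfolding b_def by auto
    then have "ln \<delta> < - ln C' / e" by (metis ln_exp ln_less_cancel_iff exp_gt_zero)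
    then have "ln C' \<le> e * - ln \<delta>" using e by (simp add: field_simps)
    moreover have L: "0 < - ln \<delta>" using \<delta> by simp
    ultimately have "ln C' / - ln \<delta> \<le> e" by (subst pos_divide_le_eq[OF L])
    then show "ereal (ln (real (cover_number \<delta> E)) / - ln \<delta>) \<le> ereal (D + e)"
      using ratio[OF \<delta>(1,2)] by simp
  qed
  then show "upper_box_dim E \<le> ereal D + ereal e" unfolding upper_box_dim_def by (simp add: Limsup_bounded)
qed

lemma upper_box_dim_holder_graph_le:
  fixes g :: "real^'q::finite \<Rightarrow> real"
  assumes K: "0 \<le> K" "\<And>x y. x \<in> unit_cube \<Longrightarrow> y \<in> unit_cube \<Longrightarrow> \<bar>g x - g y\<bar> \<le> K * dist x y powr \<sigma>"
    and \<sigma>: "0 < \<sigma>" "\<sigma> \<le> 1"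
  shows "upper_box_dim (graph_of unit_cube g) \<le> ereal (real CARD('q) + 1 - \<sigma>)"
proof (rule upper_box_dim_le)
  show "0 \<le> real CARD('q) + 1 - \<sigma>" using \<sigma> by simp
  fix \<delta> :: real assume "0 < \<delta>" "\<delta> < 1"
  then show "real (cover_number \<delta> (graph_of unit_cube g)) \<le>
    (2 * K * real CARD('q) powr \<sigma> + 2) * (2 * (real CARD('q) + 1)) powr (real CARD('q) + 1 - \<sigma>)
      * \<delta> powr - (real CARD('q) + 1 - \<sigma>)"
    using cover_number_holder_graph_le[OF K \<sigma>] by simp
qed

section \<open>Hausdorff dimension\<close>

lemma hausdorff_content_le_card_cover:
  fixes E :: "'a::metric_space set"
  assumes F: "finite F" "E \<subseteq> \<Union>F" "\<And>U. U \<in> F \<Longrightarrow> bounded U \<and> diameter U \<le> \<delta>"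
    and \<delta>: "0 \<le> \<delta>" "\<delta> \<le> \<delta>'" and s: "0 < s"
  shows "hausdorff_content s \<delta>' E \<le> ennreal (real (card F) * \<delta> powr s)"
proof -
  obtain e where e: "bij_betw e {..<card F} F"
    using ex_bij_betw_nat_finite[OF F(1)] unfolding atLeast0LessThan by blast
  define U where "U i = (if i < card F then e i else {})" for i
  have eF: "i < card F \<Longrightarrow> e i \<in> F" for i using e by (auto simp: bij_betw_def)
  have "(\<Union>i. U i) = (\<Union>i<card F. e i)" unfolding U_def by (auto split: if_splits)
  also have "\<dots> = \<Union>F" using e by (simp add: bij_betw_def)
  finally have cover: "E \<subseteq> (\<Union>i. U i)" using F(2) by simp
  have "bounded (U i) \<and> diameter (U i) \<le> \<delta>'" for i
    using eF F(3) \<delta> unfolding U_def by (auto intro: order_trans)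
  then have "hausdorff_content s \<delta>' E \<le> (\<Sum>i. ennreal (diameter (U i) powr s))"
    unfolding hausdorff_content_def using cover by (intro Inf_lower CollectI exI[of _ U]) simp
  also have "\<dots> = (\<Sum>i<card F. ennreal (diameter (U i) powr s))"
    by (rule suminf_finite) (auto simp: U_def)
  also have "\<dots> \<le> (\<Sum>i<card F. ennreal (\<delta> powr s))"
  proof (rule sum_mono)
    fix i assume "i \<in> {..<card F}"
    then have "0 \<le> diameter (U i)" "diameter (U i) \<le> \<delta>"
      using eF F(3) unfolding U_def by (auto intro: diameter_ge_0)
    then show "ennreal (diameter (U i) powr s) \<le> ennreal (\<delta> powr s)"
      using s by (intro ennreal_leI powr_mono2) auto
  qed
  also have "\<dots> = ennreal (real (card F) * \<delta> powr s)"
    by (simp add: ennreal_of_nat_eq_real_of_nat ennreal_mult)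
  finally show ?thesis .
qed

text \<open>The hypothesis on the ratio says \<open>N < \<delta> ^ -t\<close>, so \<open>N \<delta> ^ s < \<delta> ^ (s - t) \<le> \<eta>\<close>.\<close>
lemma cover_cost_le:
  fixes N :: nat
  assumes \<delta>: "0 < \<delta>" "\<delta> < 1" "\<delta> \<le> \<eta> powr (1 / (s - t))" and ts: "t < s" and \<eta>: "0 < \<eta>"
    and ratio: "ln (real N) / - ln \<delta> < t"
  shows "real N * \<delta> powr s \<le> \<eta>"
proof (cases "N = 0")
  case False
  have L: "0 < - ln \<delta>" using \<delta> by simp
  have "ln (real N) < t * - ln \<delta>" using ratio by (subst (asm) pos_divide_less_eq[OF L])
  also have "\<dots> = ln (\<delta> powr - t)" using \<delta> by (simp add: ln_powr)
  finally have "real N < \<delta> powr - t" using False \<delta> by (subst (asm) ln_less_cancel_iff) auto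
  then have "real N * \<delta> powr s \<le> \<delta> powr - t * \<delta> powr s" by (intro mult_right_mono) auto
  also have "\<dots> = \<delta> powr (s - t)" by (simp add: powr_add[symmetric])
  also have "\<dots> \<le> (\<eta> powr (1 / (s - t))) powr (s - t)" using \<delta> ts by (intro powr_mono2) auto
  also have "\<dots> = \<eta>" using ts \<eta> by (simp add: powr_powr)
  finally show ?thesis .
qed (use \<eta> in simp)

lemma hausdorff_measure_eq_0_if_lower_box_dim_less:
  fixes E :: "'a::metric_space set"
  assumes covers: "\<And>\<delta>. 0 < \<delta> \<Longrightarrow> \<exists>F. finite F \<and> E \<subseteq> \<Union>F \<and> (\<forall>U\<in>F. bounded U \<and> diameter U \<le> \<delta>)"
    and ts: "t < s" "0 < s" and lower: "lower_box_dim E < ereal t"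
  shows "hausdorff_measure s E = 0"
proof -
  define r where "r \<delta> = ln (real (cover_number \<delta> E)) / - ln \<delta>" for \<delta> :: real
  obtain y where y: "y < ereal t" "\<not> eventually (\<lambda>\<delta>. y < ereal (r \<delta>)) (at_right 0)"
    using lower unfolding lower_box_dim_def r_def not_le[symmetric] le_Liminf_iff by blast
  have frequent: "\<exists>\<delta>. 0 < \<delta> \<and> \<delta> < b \<and> r \<delta> < t" if "0 < b" for b
  proof (rule ccontr)
    assume "\<not> ?thesis"
    then have "eventually (\<lambda>\<delta>. y < ereal (r \<delta>)) (at_right 0)"
      using y(1) by (intro eventually_mono[OF eventually_at_right_real[OF that]])
        (metis greaterThanLessThan_iff less_ereal.simps(1) not_less order_less_le_trans)
    then show False using y(2) by blast
  qed
  have "hausdorff_content s \<delta>' E \<le> ennreal \<eta>" if \<delta>': "0 < \<delta>'" and \<eta>: "0 < \<eta>" for \<delta>' \<eta>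
  proof -
    obtain \<delta> where \<delta>: "0 < \<delta>" "\<delta> < min (min \<delta>' 1) (\<eta> powr (1 / (s - t)))" "r \<delta> < t"
      using frequent[of "min (min \<delta>' 1) (\<eta> powr (1 / (s - t)))"] \<delta>' \<eta> by auto
    obtain F0 where "finite F0" "E \<subseteq> \<Union>F0" "\<And>U. U \<in> F0 \<Longrightarrow> bounded U \<and> diameter U \<le> \<delta>"
      using covers[OF \<delta>(1)] by blast
    then obtain F where F: "finite F" "card F = cover_number \<delta> E" "E \<subseteq> \<Union>F"
      "\<And>U. U \<in> F \<Longrightarrow> bounded U \<and> diameter U \<le> \<delta>"
      using cover_number_attained by blast
    have "hausdorff_content s \<delta>' E \<le> ennreal (real (card F) * \<delta> powr s)"
      using \<delta> ts by (intro hausdorff_content_le_card_cover[OF F(1,3,4)]) auto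
    also have "\<dots> \<le> ennreal \<eta>"
      using \<delta> ts \<eta> F(2) unfolding r_def by (intro ennreal_leI cover_cost_le[of \<delta> \<eta> s t]) auto
    finally show ?thesis .
  qed
  then have "hausdorff_content s \<delta>' E = 0" if "0 < \<delta>'" for \<delta>'
    using that by (metis add_0 ennreal_le_epsilon le_zero_eq)
  then show ?thesis unfolding hausdorff_measure_def by simp
qed

lemma lower_box_dim_nonneg: "0 \<le> lower_box_dim E"
  unfolding lower_box_dim_def
proof (rule Liminf_bounded)
  show "eventually (\<lambda>\<delta>. 0 \<le> ereal (ln (real (cover_number \<delta> E)) / - ln \<delta>)) (at_right (0::real))"
  proof (rule eventually_mono[OF eventually_at_right_real[of 0 1]])
    fix \<delta> :: real assume "\<delta> \<in> {0<..<1}"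
    then have L: "0 < - ln \<delta>" by simp
    have "0 \<le> ln (real (cover_number \<delta> E))" by (cases "cover_number \<delta> E = 0") auto
    then have "0 \<le> ln (real (cover_number \<delta> E)) / - ln \<delta>" using L by (rule divide_nonneg_pos)
    then show "0 \<le> ereal (ln (real (cover_number \<delta> E)) / - ln \<delta>)" by simp
  qed simp
qed

lemma hausdorff_dim_le_lower_box_dim:
  fixes E :: "'a::metric_space set"
  assumes covers: "\<And>\<delta>. 0 < \<delta> \<Longrightarrow> \<exists>F. finite F \<and> E \<subseteq> \<Union>F \<and> (\<forall>U\<in>F. bounded U \<and> diameter U \<le> \<delta>)"
  shows "hausdorff_dim E \<le> lower_box_dim E"
proof (rule ereal_le_epsilon2)
  fix e :: real assume e: "0 < e"
  show "hausdorff_dim E \<le> lower_box_dim E + ereal e"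
  proof (cases "lower_box_dim E")
    case (real l)
    then have "0 \<le> l" using lower_box_dim_nonneg[of E] by simp
    then have "hausdorff_measure (l + e) E = 0"
      using e real by (intro hausdorff_measure_eq_0_if_lower_box_dim_less[OF covers, of "l + e / 2"]) auto
    then have "hausdorff_dim E \<le> ereal (l + e)"
      unfolding hausdorff_dim_def using e \<open>0 \<le> l\<close> by (intro Inf_lower) auto
    then show ?thesis using real by simp
  qed (use lower_box_dim_nonneg[of E] in auto)
qed

lemma lower_box_dim_le_upper_box_dim: "lower_box_dim E \<le> upper_box_dim E"
  unfolding lower_box_dim_def upper_box_dim_def by (rule Liminf_le_Limsup) simp

lemma emeasure_lborel_cbox_cart:
  fixes a b :: "real^'q::finite"
  assumes "cbox a b \<noteq> {}"
  shows "emeasure lborel (cbox a b) = ennreal (\<Prod>k\<in>UNIV. b $ k - a $ k)"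
  using content_cbox_cart[OF assms] emeasure_lborel_cbox_finite[of a b]
  by (simp add: emeasure_eq_ennreal_measure)

lemma power_le_powr_of_le_1:
  fixes r s :: real
  assumes "0 \<le> r" "r \<le> 1" "0 < s" "s \<le> real n"
  shows "r ^ n \<le> r powr s"
proof (cases "r = 0")
  case False
  then have "r ^ n = r powr real n" using assms by (simp add: powr_realpow)
  also have "\<dots> \<le> r powr s" using assms by (intro powr_mono') auto
  finally show ?thesis .
qed (use assms in \<open>cases n, auto\<close>)

lemma fst_image_enclosure:
  fixes U :: "((real^'q::finite) \<times> 'b::metric_space) set"
  assumes U: "bounded U" "diameter U \<le> 1" and s: "0 < s" "s \<le> real CARD('q)"
  obtains B where "B \<in> sets lborel" "fst ` U \<subseteq> B"
    "emeasure lborel B \<le> ennreal (2 ^ CARD('q) * diameter U powr s)"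
proof (cases "U = {}")
  case False
  then obtain p0 where p0: "p0 \<in> U" by blast
  define r where "r = diameter U"
  define B where "B = cbox (fst p0 - r *\<^sub>R 1) (fst p0 + r *\<^sub>R 1)"
  have r: "0 \<le> r" "r \<le> 1" unfolding r_def using U diameter_ge_0 by auto
  have inB: "y \<in> B \<longleftrightarrow> (\<forall>k. \<bar>y $ k - fst p0 $ k\<bar> \<le> r)" for y
    unfolding B_def by (auto simp: mem_box_cart abs_le_iff algebra_simps)
  have sub: "fst ` U \<subseteq> B"
  proof clarify
    fix p assume p: "p \<in> U"
    have "dist (fst p) (fst p0) \<le> dist p p0" by (rule dist_fst_le)
    also have "\<dots> \<le> r" unfolding r_def using U(1) p p0 by (rule diameter_bounded_bound)
    finally have "\<bar>fst p $ k - fst p0 $ k\<bar> \<le> r" for k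
      using component_le_norm_cart[of "fst p - fst p0" k] by (simp add: dist_norm)
    then show "fst p \<in> B" unfolding inB by blast
  qed
  have "B \<noteq> {}" using inB[of "fst p0"] r by auto
  then have "emeasure lborel B = ennreal (\<Prod>k\<in>UNIV. (fst p0 + r *\<^sub>R 1) $ k - (fst p0 - r *\<^sub>R 1) $ k)"
    unfolding B_def by (rule emeasure_lborel_cbox_cart)
  also have "\<dots> = ennreal ((2 * r) ^ CARD('q))" by simp
  also have "\<dots> \<le> ennreal (2 ^ CARD('q) * diameter U powr s)"
    using power_le_powr_of_le_1[OF r s] unfolding r_def power_mult_distrib by (intro ennreal_leI) simp
  finally have meas: "emeasure lborel B \<le> ennreal (2 ^ CARD('q) * diameter U powr s)" .
  show ?thesis by (rule that[OF _ sub meas]) (simp add: B_def)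
qed (use that[of "{}"] in simp)

text \<open>The projections of the sets of a cover of \<open>E\<close> cover the unit cube, whose Lebesgue measure
  is \<open>1\<close>, and each lies in a cube of side twice its diameter.\<close>
lemma hausdorff_content_ge_if_unit_cube_subset_fst:
  fixes E :: "((real^'q::finite) \<times> 'b::metric_space) set"
  assumes E: "unit_cube \<subseteq> fst ` E" and s: "0 < s" "s \<le> real CARD('q)"
  shows "ennreal (1 / 2 ^ CARD('q)) \<le> hausdorff_content s 1 E"
  unfolding hausdorff_content_def
proof (rule Inf_greatest, clarify)
  fix U :: "nat \<Rightarrow> ((real^'q) \<times> 'b) set"
  assume cov: "E \<subseteq> (\<Union>n. U n)" and U: "\<forall>n. bounded (U n) \<and> diameter (U n) \<le> 1"
  have "\<forall>i. \<exists>B. B \<in> sets lborel \<and> fst ` U i \<subseteq> B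
      \<and> emeasure lborel B \<le> ennreal (2 ^ CARD('q) * diameter (U i) powr s)"
    using U fst_image_enclosure[OF _ _ s] by metis
  then obtain B where "\<forall>i. B i \<in> sets lborel \<and> fst ` U i \<subseteq> B i
      \<and> emeasure lborel (B i) \<le> ennreal (2 ^ CARD('q) * diameter (U i) powr s)"
    by (rule choice[THEN exE])
  then have B: "\<And>i. B i \<in> sets lborel" "\<And>i. fst ` U i \<subseteq> B i"
    "\<And>i. emeasure lborel (B i) \<le> ennreal (2 ^ CARD('q) * diameter (U i) powr s)"
    by blast+
  have "emeasure lborel (unit_cube :: (real^'q) set) = 1"
    using zero_mem_unit_cube unfolding unit_cube_def by (subst emeasure_lborel_cbox_cart) auto
  moreover have "unit_cube \<subseteq> (\<Union>i. B i)"
  proof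
    fix y :: "real^'q" assume "y \<in> unit_cube"
    then obtain p i where "p \<in> U i" "y = fst p" using E cov by blast
    then show "y \<in> (\<Union>i. B i)" using B(2) by blast
  qed
  ultimately have "1 \<le> emeasure lborel (\<Union>i. B i)"
    using B(1) by (metis emeasure_mono sets.countable_UN UNIV_I image_subset_iff)
  also have "\<dots> \<le> (\<Sum>i. emeasure lborel (B i))" using B(1) by (intro emeasure_subadditive_countably) auto
  also have "\<dots> \<le> (\<Sum>i. ennreal (2 ^ CARD('q)) * ennreal (diameter (U i) powr s))"
    using B(3) by (intro suminf_le) (auto simp: ennreal_mult)
  also have "\<dots> = ennreal (2 ^ CARD('q)) * (\<Sum>i. ennreal (diameter (U i) powr s))" by simp
  finally have "ennreal (1 / 2 ^ CARD('q)) * 1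
      \<le> ennreal (1 / 2 ^ CARD('q)) * (ennreal (2 ^ CARD('q)) * (\<Sum>i. ennreal (diameter (U i) powr s)))"
    by (rule mult_left_mono) simp
  then show "ennreal (1 / 2 ^ CARD('q)) \<le> (\<Sum>i. ennreal (diameter (U i) powr s))"
    by (simp add: mult.assoc[symmetric] ennreal_mult[symmetric])
qed

lemma hausdorff_dim_ge_if_unit_cube_subset_fst:
  fixes E :: "((real^'q::finite) \<times> 'b::metric_space) set"
  assumes E: "unit_cube \<subseteq> fst ` E"
  shows "ereal (real CARD('q)) \<le> hausdorff_dim E"
  unfolding hausdorff_dim_def
proof (rule Inf_greatest, clarify)
  fix s assume s: "0 < s" "hausdorff_measure s E = 0"
  show "ereal (real CARD('q)) \<le> ereal s"
  proof (rule ccontr)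
    assume "\<not> ?thesis"
    then have "ennreal (1 / 2 ^ CARD('q)) \<le> hausdorff_content s 1 E"
      using hausdorff_content_ge_if_unit_cube_subset_fst[OF E s(1)] by simp
    also have "\<dots> \<le> hausdorff_measure s E" unfolding hausdorff_measure_def by (rule SUP_upper) simp
    finally show False using s(2) by simp
  qed
qed

lemma fst_graph_of: "fst ` graph_of S g = S"
  unfolding graph_of_def by force

text \<open>The vertex condition and the bound on \<open>\<parallel>\<alpha>\<parallel>\<^sub>\<infinity> + [\<alpha>]\<^sub>\<sigma>\<close> are what make \<open>f\<^sup>\<alpha>\<close> exist;
  its existence is assumed here, and only \<open>\<parallel>\<alpha>\<parallel>\<^sub>\<infinity> < a ^ \<sigma>\<close> enters the estimates.\<close>
theorem theorem4p9:
  fixes M :: "'q::finite \<Rightarrow> nat" and xs :: "'q \<Rightarrow> nat \<Rightarrow> real"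
    and f \<alpha> s g :: "real^'q \<Rightarrow> real" and \<sigma> :: real
  assumes part: "partition_data M xs"
    and sigma: "0 < \<sigma>" "\<sigma> \<le> 1"
    and hf: "holder_on \<sigma> unit_cube f"
    and ha: "holder_on \<sigma> unit_cube \<alpha>"
    and hs: "holder_on \<sigma> unit_cube s"
    and vert: "\<forall>x. (\<forall>k. x $ k = 0 \<or> x $ k = 1) \<longrightarrow> s x = f x"
    and cond: "max (sup_norm_on unit_cube \<alpha> /
                    (Min {\<bar>acoef xs k i\<bar> | k i. 1 \<le> i \<and> i \<le> M k}) powr \<sigma>)
                   (sup_norm_on unit_cube \<alpha> + holder_seminorm \<sigma> unit_cube \<alpha>) < 1"
    and frac: "is_alpha_fractal M xs f \<alpha> s g"
  shows "holder_on \<sigma> unit_cube g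
    \<and> ereal (real CARD('q)) \<le> hausdorff_dim (graph_of unit_cube g)
    \<and> hausdorff_dim (graph_of unit_cube g) \<le> lower_box_dim (graph_of unit_cube g)
    \<and> lower_box_dim (graph_of unit_cube g) \<le> upper_box_dim (graph_of unit_cube g)
    \<and> upper_box_dim (graph_of unit_cube g) \<le> ereal (real CARD('q) + 1 - \<sigma>)"
proof -
  have "sup_norm_on unit_cube \<alpha> / min_ratio M xs powr \<sigma> < 1"
    using cond unfolding min_ratio_def by simp
  then have hg: "holder_on \<sigma> unit_cube g"
    by (rule holder_on_alpha_fractal[OF part sigma(1) hf ha hs _ frac])
  obtain K where K: "0 \<le> K" "\<And>x y. x \<in> unit_cube \<Longrightarrow> y \<in> unit_cube \<Longrightarrow> \<bar>g x - g y\<bar> \<le> K * dist x y powr \<sigma>"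
    using holder_onE[OF hg] by blast
  have "ereal (real CARD('q)) \<le> hausdorff_dim (graph_of unit_cube g)"
    by (rule hausdorff_dim_ge_if_unit_cube_subset_fst) (simp add: fst_graph_of)
  moreover have "hausdorff_dim (graph_of unit_cube g) \<le> lower_box_dim (graph_of unit_cube g)"
    by (rule hausdorff_dim_le_lower_box_dim[OF holder_graph_finite_cover[OF K sigma(1)]])
  ultimately show ?thesis
    using hg lower_box_dim_le_upper_box_dim upper_box_dim_holder_graph_le[OF K sigma] by blast
qed

end
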